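(* Let $0<a<b$, let $\alpha\in(0,1)$, let $k:[a,b]\to\mathbb{R}$ be a continuous nonnegative map, differentiable at every $t>a$, with $k(t)\neq 0$ and $k'(t)\neq 0$ whenever $t>a$. Let $f:[a,b]\to\mathbb{R}$ be continuous on $[a,b]$, $\alpha$-differentiable at every point of $(a,b)$, and suppose $f(a)=f(b)$. Then there exists $c\in(a,b)$ such that $D^{\alpha}(f)(c)=0$.
   Context: For $k$ as in the claim, $f:[a,b]\to\mathbb{R}$, $\alpha\in(0,1]$ and $t\in(a,b)$, the generalized fractional derivative of $f$ of order $\alpha$ at $t$ is $$D^{\alpha}(f)(t)=f^{(\alpha)}(t):=\lim_{\varepsilon\to 0}\frac{f\left(t-k(t)+k(t)\,e^{\varepsilon\frac{(k(t))^{-\alpha}}{k'(t)}}\right)-f(t)}{\varepsilon},$$ and $f$ is called $\alpha$-differentiable at $t$ if this limit exists. *)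

theory Defs
  imports "HOL-Analysis.Analysis"
begin

definition gfrac_point :: "(real \<Rightarrow> real) \<Rightarrow> (real \<Rightarrow> real) \<Rightarrow> real \<Rightarrow> real \<Rightarrow> real \<Rightarrow> real" where
  "gfrac_point k k' \<alpha> t \<epsilon> = t - k t + k t * exp (\<epsilon> * (k t powr (- \<alpha>)) / k' t)"

definition has_gfrac_deriv ::
  "(real \<Rightarrow> real) \<Rightarrow> (real \<Rightarrow> real) \<Rightarrow> real \<Rightarrow> (real \<Rightarrow> real) \<Rightarrow> real \<Rightarrow> real \<Rightarrow> bool" where
  "has_gfrac_deriv k k' \<alpha> f t D \<longleftrightarrow>
     ((\<lambda>\<epsilon>. (f (gfrac_point k k' \<alpha> t \<epsilon>) - f t) / \<epsilon>) \<longlongrightarrow> D) (at 0)"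

definition gfrac_differentiable ::
  "(real \<Rightarrow> real) \<Rightarrow> (real \<Rightarrow> real) \<Rightarrow> real \<Rightarrow> (real \<Rightarrow> real) \<Rightarrow> real \<Rightarrow> bool" where
  "gfrac_differentiable k k' \<alpha> f t \<longleftrightarrow> (\<exists>D. has_gfrac_deriv k k' \<alpha> f t D)"

definition gfrac_deriv ::
  "(real \<Rightarrow> real) \<Rightarrow> (real \<Rightarrow> real) \<Rightarrow> real \<Rightarrow> (real \<Rightarrow> real) \<Rightarrow> real \<Rightarrow> real" where
  "gfrac_deriv k k' \<alpha> f t = (THE D. has_gfrac_deriv k k' \<alpha> f t D)"

end

theory Submission
  imports Defs
begin

text \<open>As in Rolle's theorem: a continuous function with \<open>f a = f b\<close> attains an extremum at
  some interior point \<open>c\<close>. The point \<open>gfrac_point k k' \<alpha> c \<epsilon>\<close> tends to \<open>c\<close> as \<open>\<epsilon> \<rightarrow> 0\<close>,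
  so near \<open>\<epsilon> = 0\<close> the numerator of the fractional difference quotient has constant sign
  while \<open>\<epsilon>\<close> changes sign; the one-sided limits therefore force the derivative to vanish.\<close>

lemma continuous_on_interval_interior_extremum:
  fixes f :: "real \<Rightarrow> real"
  assumes "a < b" "continuous_on {a..b} f" "f a = f b"
  shows "\<exists>c\<in>{a<..<b}. (\<forall>x\<in>{a..b}. f x \<le> f c) \<or> (\<forall>x\<in>{a..b}. f c \<le> f x)"
proof -
  have ne: "{a..b} \<noteq> {}" using assms(1) by auto
  obtain m where m: "m \<in> {a..b}" "\<forall>x\<in>{a..b}. f x \<le> f m"
    using continuous_attains_sup[OF compact_Icc ne assms(2)] by blast
  obtain n where n: "n \<in> {a..b}" "\<forall>x\<in>{a..b}. f n \<le> f x"
    using continuous_attains_inf[OF compact_Icc ne assms(2)] by blast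
  consider "m \<in> {a<..<b}" | "n \<in> {a<..<b}" | "m \<in> {a, b}" "n \<in> {a, b}"
    using m(1) n(1) by fastforce
  then show ?thesis
  proof cases
    case 3
    then have "f m = f n" using assms(3) by auto
    moreover have "(a + b) / 2 \<in> {a..b}" using assms(1) by auto
    ultimately have "\<forall>x\<in>{a..b}. f x \<le> f ((a + b) / 2)"
      using m n by (metis order_antisym)
    then show ?thesis using assms(1) by (intro bexI[of _ "(a + b) / 2"]) auto
  qed (use m n in blast)+
qed

lemma difference_quotient_limit_eq_0_at_local_max:
  fixes f g :: "real \<Rightarrow> real"
  assumes "(g \<longlongrightarrow> c) (at 0)" "open U" "c \<in> U" "\<forall>x\<in>U. f x \<le> f c"
    and "((\<lambda>\<epsilon>. (f (g \<epsilon>) - f c) / \<epsilon>) \<longlongrightarrow> D) (at 0)"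
  shows "D = 0"
proof -
  let ?q = "\<lambda>\<epsilon>. (f (g \<epsilon>) - f c) / \<epsilon>"
  have near: "eventually (\<lambda>\<epsilon>. f (g \<epsilon>) \<le> f c) (at 0)"
    using topological_tendstoD[OF assms(1-3)] by (auto elim!: eventually_mono simp: assms(4))
  have "eventually (\<lambda>\<epsilon>. ?q \<epsilon> \<le> 0) (at_right 0)"
    using eventually_conj[OF near[unfolded eventually_at_split, THEN conjunct2]
        eventually_at_right_less]
    by (auto elim!: eventually_mono simp: divide_nonpos_pos)
  then have "D \<le> 0"
    using tendsto_upperbound assms(5) filterlim_at_split trivial_limit_at_right_real by blast
  moreover have "eventually (\<lambda>\<epsilon>. 0 \<le> ?q \<epsilon>) (at_left 0)"
    using eventually_conj[OF near[unfolded eventually_at_split, THEN conjunct1]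
        eventually_at_left_real[of "-1" 0]]
    by (auto elim!: eventually_mono simp: divide_nonpos_neg)
  then have "0 \<le> D"
    using tendsto_lowerbound assms(5) filterlim_at_split trivial_limit_at_left_real by blast
  ultimately show ?thesis by simp
qed

lemma difference_quotient_limit_eq_0_at_local_extremum:
  fixes f g :: "real \<Rightarrow> real"
  assumes "(g \<longlongrightarrow> c) (at 0)" "open U" "c \<in> U"
    and "(\<forall>x\<in>U. f x \<le> f c) \<or> (\<forall>x\<in>U. f c \<le> f x)"
    and "((\<lambda>\<epsilon>. (f (g \<epsilon>) - f c) / \<epsilon>) \<longlongrightarrow> D) (at 0)"
  shows "D = 0"
  using assms(4)
proof
  assume "\<forall>x\<in>U. f c \<le> f x"
  then have "- D = 0"
  proof (intro difference_quotient_limit_eq_0_at_local_max[OF assms(1-3), where f = "\<lambda>x. - f x"])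
    show "((\<lambda>\<epsilon>. (- f (g \<epsilon>) - - f c) / \<epsilon>) \<longlongrightarrow> - D) (at 0)"
      using tendsto_minus[OF assms(5)] by (simp add: minus_divide_left)
  qed simp
  then show ?thesis by simp
qed (use difference_quotient_limit_eq_0_at_local_max[OF assms(1-3)] assms(5) in blast)

lemma tendsto_gfrac_point: "(gfrac_point k k' \<alpha> t \<longlongrightarrow> t) (at 0)"
proof -
  have "(gfrac_point k k' \<alpha> t \<longlongrightarrow> gfrac_point k k' \<alpha> t 0) (at 0)"
    unfolding gfrac_point_def times_divide_eq_right[symmetric] by (intro tendsto_intros)
  then show ?thesis by (simp add: gfrac_point_def)
qed

lemma gfrac_derivI:
  assumes "has_gfrac_deriv k k' \<alpha> f t D"
  shows "gfrac_deriv k k' \<alpha> f t = D"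
  unfolding gfrac_deriv_def
proof (rule the_equality)
  fix E
  assume "has_gfrac_deriv k k' \<alpha> f t E"
  with assms show "E = D"
    unfolding has_gfrac_deriv_def using tendsto_unique[OF at_neq_bot] by blast
qed (fact assms)

lemma gfrac_deriv_eq_0_at_local_extremum:
  assumes "gfrac_differentiable k k' \<alpha> f c" "open U" "c \<in> U"
    and "(\<forall>x\<in>U. f x \<le> f c) \<or> (\<forall>x\<in>U. f c \<le> f x)"
  shows "gfrac_deriv k k' \<alpha> f c = 0"
proof -
  obtain D where D: "has_gfrac_deriv k k' \<alpha> f c D"
    using assms(1) unfolding gfrac_differentiable_def by blast
  then have "D = 0"
    using difference_quotient_limit_eq_0_at_local_extremum[OF tendsto_gfrac_point assms(2-4)]
    unfolding has_gfrac_deriv_def by blast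
  with D show ?thesis by (simp add: gfrac_derivI)
qed

theorem mainTheorem4:
  fixes a b \<alpha> :: real and k k' f :: "real \<Rightarrow> real"
  assumes "0 < a" "a < b"
    and "0 < \<alpha>" "\<alpha> < 1"
    and "continuous_on {a..b} k"
    and "\<forall>t\<in>{a..b}. 0 \<le> k t"
    and "\<forall>t\<in>{a<..b}. (k has_real_derivative k' t) (at t within {a..b})"
    and "\<forall>t\<in>{a<..b}. k t \<noteq> 0 \<and> k' t \<noteq> 0"
    and "continuous_on {a..b} f"
    and "\<forall>t\<in>{a<..<b}. gfrac_differentiable k k' \<alpha> f t"
    and "f a = f b"
  shows "\<exists>c\<in>{a<..<b}. gfrac_deriv k k' \<alpha> f c = 0"
proof -
  obtain c where c: "c \<in> {a<..<b}"
    and "(\<forall>x\<in>{a..b}. f x \<le> f c) \<or> (\<forall>x\<in>{a..b}. f c \<le> f x)"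
    using continuous_on_interval_interior_extremum[OF assms(2,9,11)] by blast
  then have "(\<forall>x\<in>{a<..<b}. f x \<le> f c) \<or> (\<forall>x\<in>{a<..<b}. f c \<le> f x)"
    by auto
  then have "gfrac_deriv k k' \<alpha> f c = 0"
    using gfrac_deriv_eq_0_at_local_extremum[OF _ open_greaterThanLessThan c] assms(10) c
    by blast
  with c show ?thesis by blast
qed

end
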